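(* Let $X$ be a locally solid vector lattice. Then each of $Orth_n(X)$, $Orth_b(X)$ and $Orth_c(X)$ is a vector lattice (under the order inherited from $Orth(X)$). In particular, if $T$ belongs to one of these spaces, then its modulus $|T|$ exists and belongs to the same space.
   Context: All vector lattices are Archimedean. For $x,y$ in a vector lattice, $x\perp y$ means $|x|\wedge|y|=0$. A linear operator $T:X\to X$ is band preserving if $x\perp y$ implies $T(x)\perp y$. An orthomorphism on $X$ is an order bounded band preserving linear operator; $Orth(X)$ is the vector lattice of all orthomorphisms on $X$ (ordered by $S\le T$ iff $S(x)\le T(x)$ for all $x\ge 0$). A locally solid vector lattice is a vector lattice with a linear topology having a base of solid zero neighborhoods. An orthomorphism $T$ on a locally solid vector lattice $X$ is $nb$-bounded if there is a zero neighborhood $U$ such that $T(U)$ is topologically bounded; it is $bb$-bounded if it maps topologically bounded sets to topologically bounded sets. $Orth_n(X)$, $Orth_b(X)$, $Orth_c(X)$ denote the sets of $nb$-bounded, $bb$-bounded, and continuous orthomorphisms on $X$, respectively. *)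

theory Defs
  imports "HOL-Analysis.Analysis"
begin

text \<open>Vector lattices are modelled by a type of class ordered_real_vector + lattice
  (a Riesz space), together with an explicit Archimedean hypothesis.\<close>

definition vl_archimedean :: "('a::{ordered_real_vector, lattice}) itself \<Rightarrow> bool" where
  "vl_archimedean _ \<longleftrightarrow>
     (\<forall>x y::'a. 0 \<le> x \<and> (\<forall>n::nat. real n *\<^sub>R x \<le> y) \<longrightarrow> x = 0)"

definition vabs :: "'a::{ordered_real_vector, lattice} \<Rightarrow> 'a" where
  "vabs x = sup x (- x)"

definition vdisj :: "'a::{ordered_real_vector, lattice} \<Rightarrow> 'a \<Rightarrow> bool" where
  "vdisj x y \<longleftrightarrow> inf (vabs x) (vabs y) = 0"

definition band_preserving :: "('a::{ordered_real_vector, lattice} \<Rightarrow> 'a) \<Rightarrow> bool" where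
  "band_preserving T \<longleftrightarrow> (\<forall>x y. vdisj x y \<longrightarrow> vdisj (T x) y)"

definition order_bounded_op :: "('a::{ordered_real_vector, lattice} \<Rightarrow> 'a) \<Rightarrow> bool" where
  "order_bounded_op T \<longleftrightarrow>
     (\<forall>a b. a \<le> b \<longrightarrow> (\<exists>c d. \<forall>x. a \<le> x \<and> x \<le> b \<longrightarrow> c \<le> T x \<and> T x \<le> d))"

definition Orth :: "('a::{ordered_real_vector, lattice} \<Rightarrow> 'a) set" where
  "Orth = {T. linear T \<and> order_bounded_op T \<and> band_preserving T}"

definition orth_le :: "('a::{ordered_real_vector, lattice} \<Rightarrow> 'a) \<Rightarrow> ('a \<Rightarrow> 'a) \<Rightarrow> bool" where
  "orth_le S T \<longleftrightarrow> (\<forall>x. 0 \<le> x \<longrightarrow> S x \<le> T x)"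

definition orth_sup_of :: "('a::{ordered_real_vector, lattice} \<Rightarrow> 'a) \<Rightarrow> ('a \<Rightarrow> 'a) \<Rightarrow> ('a \<Rightarrow> 'a) \<Rightarrow> bool" where
  "orth_sup_of R S T \<longleftrightarrow> R \<in> Orth \<and> orth_le S R \<and> orth_le T R \<and>
     (\<forall>Q\<in>Orth. orth_le S Q \<and> orth_le T Q \<longrightarrow> orth_le R Q)"

text \<open>A set of operators is a vector lattice under the order inherited from Orth(X):
  a linear subspace of Orth(X) closed under the lattice operations of Orth(X).\<close>
definition orth_vector_sublattice :: "('a::{ordered_real_vector, lattice} \<Rightarrow> 'a) set \<Rightarrow> bool" where
  "orth_vector_sublattice A \<longleftrightarrow>
     A \<subseteq> Orth \<and> (\<lambda>x. 0) \<in> A \<and>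
     (\<forall>S\<in>A. \<forall>T\<in>A. (\<lambda>x. S x + T x) \<in> A) \<and>
     (\<forall>c::real. \<forall>T\<in>A. (\<lambda>x. c *\<^sub>R T x) \<in> A) \<and>
     (\<forall>S\<in>A. \<forall>T\<in>A. \<exists>R\<in>A. orth_sup_of R S T)"

definition zero_nbhd :: "'a::real_vector topology \<Rightarrow> 'a set \<Rightarrow> bool" where
  "zero_nbhd \<tau> U \<longleftrightarrow> (\<exists>V. openin \<tau> V \<and> 0 \<in> V \<and> V \<subseteq> U)"

definition solid_set :: "'a::{ordered_real_vector, lattice} set \<Rightarrow> bool" where
  "solid_set U \<longleftrightarrow> (\<forall>x y. y \<in> U \<and> vabs x \<le> vabs y \<longrightarrow> x \<in> U)"

definition linear_topology :: "'a::real_vector topology \<Rightarrow> bool" where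
  "linear_topology \<tau> \<longleftrightarrow> topspace \<tau> = UNIV \<and>
     continuous_map (prod_topology \<tau> \<tau>) \<tau> (\<lambda>(x, y). x + y) \<and>
     continuous_map (prod_topology euclideanreal \<tau>) \<tau> (\<lambda>(c, x). c *\<^sub>R x)"

definition locally_solid :: "'a::{ordered_real_vector, lattice} topology \<Rightarrow> bool" where
  "locally_solid \<tau> \<longleftrightarrow> linear_topology \<tau> \<and>
     (\<forall>U. zero_nbhd \<tau> U \<longrightarrow> (\<exists>V. zero_nbhd \<tau> V \<and> solid_set V \<and> V \<subseteq> U))"

definition top_bounded :: "'a::real_vector topology \<Rightarrow> 'a set \<Rightarrow> bool" where
  "top_bounded \<tau> B \<longleftrightarrow> (\<forall>U. zero_nbhd \<tau> U \<longrightarrow> (\<exists>c>0. B \<subseteq> (\<lambda>x. c *\<^sub>R x) ` U))"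

definition Orth_n :: "'a::{ordered_real_vector, lattice} topology \<Rightarrow> ('a \<Rightarrow> 'a) set" where
  "Orth_n \<tau> = {T \<in> Orth. \<exists>U. zero_nbhd \<tau> U \<and> top_bounded \<tau> (T ` U)}"

definition Orth_b :: "'a::{ordered_real_vector, lattice} topology \<Rightarrow> ('a \<Rightarrow> 'a) set" where
  "Orth_b \<tau> = {T \<in> Orth. \<forall>B. top_bounded \<tau> B \<longrightarrow> top_bounded \<tau> (T ` B)}"

definition Orth_c :: "'a::{ordered_real_vector, lattice} topology \<Rightarrow> ('a \<Rightarrow> 'a) set" where
  "Orth_c \<tau> = {T \<in> Orth. continuous_map \<tau> \<tau> T}"

end

theory Submission
  imports Defs "HOL-Library.Lattice_Algebras"
begin

text \<open>The heart of the matter is that an orthomorphism \<open>T\<close> of an Archimedean vector lattice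
  maps positive vectors to mutually ``sign-disjoint'' images: \<open>(T x)\<^sup>+ \<sqinter> (T y)\<^sup>- = 0\<close> for
  \<open>x, y \<ge> 0\<close>. To see it, slice \<open>y\<close> against multiples of \<open>x\<close>: writing \<open>y - r x\<close> as a part
  clamped into \<open>[-\<delta> x, \<delta> x]\<close> plus a remainder, the remainder lives in the band of the
  vectors where \<open>y\<close> is far from \<open>r x\<close>, and sweeping \<open>r\<close> from \<open>0\<close> to \<open>2n\<close> in steps of \<open>2/n\<close>
  pushes \<open>(T x)\<^sup>+ \<sqinter> (T y)\<^sup>-\<close> below \<open>O(1/n)\<close> times a fixed vector.

  Consequently \<open>|T (x + y)| = |T x| + |T y|\<close> for \<open>x, y \<ge> 0\<close>, so \<open>|T| x = |T x\<^sup>+| - |T x\<^sup>-|\<close>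
  is linear; it is the modulus of \<open>T\<close> in \<open>Orth(X)\<close>, and \<open>sup S T = (S + T + |S - T|) / 2\<close>.
  Since \<open>||T| x| \<le> |T |x||\<close>, solidity of the neighbourhoods transfers \<open>nb\<close>- and
  \<open>bb\<close>-boundedness from \<open>T\<close> to \<open>|T|\<close>, and continuity transfers because \<open>x \<mapsto> |x|\<close> is
  continuous in a locally solid topology.\<close>

interpretation riesz: lattice_ab_group_add_abs vabs "(+)" "0::'a::{ordered_real_vector, lattice}"
  "(-)" uminus "(\<le>)" "(<)" inf sup
  by unfold_locales (simp_all add: add_left_mono vabs_def)

section \<open>Vector lattice arithmetic\<close>

definition vpos :: "'a::{ordered_real_vector, lattice} \<Rightarrow> 'a" where
  "vpos a = sup a 0"

definition vneg :: "'a::{ordered_real_vector, lattice} \<Rightarrow> 'a" where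
  "vneg a = sup (- a) 0"

lemma vpos_nonneg: "0 \<le> vpos a"
  unfolding vpos_def by simp

lemma vneg_nonneg: "0 \<le> vneg a"
  unfolding vneg_def by simp

lemma vpos_ge: "a \<le> vpos a"
  unfolding vpos_def by simp

lemma vpos_of_nonneg: "0 \<le> a \<Longrightarrow> vpos a = a"
  unfolding vpos_def by (rule sup_absorb1)

lemma vneg_of_nonneg: "0 \<le> a \<Longrightarrow> vneg a = 0"
  unfolding vneg_def by (rule sup_absorb2) simp

lemma vpos_mono: "a \<le> b \<Longrightarrow> vpos a \<le> vpos b"
  unfolding vpos_def by (rule sup_mono) auto

lemma vpos_minus: "vpos (- a) = vneg a"
  unfolding vpos_def vneg_def ..

lemma vneg_eq_minus_nprt: "vneg a = - riesz.nprt a"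
  unfolding vneg_def riesz.nprt_def by (simp add: riesz.neg_inf_eq_sup)

lemma vabs_eq_vpos_plus_vneg: "vabs a = vpos a + vneg a"
  unfolding riesz.abs_prts vneg_eq_minus_nprt by (simp add: vpos_def riesz.pprt_def)

lemma vpos_minus_vneg: "vpos a - vneg a = a"
  using riesz.prts[of a] unfolding vneg_eq_minus_nprt by (simp add: vpos_def riesz.pprt_def)

lemma inf_vpos_vneg: "inf (vpos a) (vneg a) = 0"
proof -
  have "inf (vpos a) (vneg a) = vneg a + inf a 0"
    using vpos_minus_vneg[of a] by (simp add: riesz.add_inf_distrib_left algebra_simps)
  also have "\<dots> = 0"
    unfolding vneg_eq_minus_nprt riesz.nprt_def by (rule left_minus)
  finally show ?thesis .
qed

lemma vabs_eq_double_vpos: "vabs a = 2 *\<^sub>R vpos a - a"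
  using vabs_eq_vpos_plus_vneg[of a] vpos_minus_vneg[of a] by (simp add: scaleR_2 algebra_simps)

lemma vpos_le_vabs: "vpos a \<le> vabs a"
  unfolding vabs_eq_vpos_plus_vneg using vneg_nonneg by (rule add_increasing2) simp

lemma vneg_le_vabs: "vneg a \<le> vabs a"
  unfolding vabs_eq_vpos_plus_vneg using vpos_nonneg by (rule add_increasing) simp

lemma inf_plus_vpos_diff: "inf a b + vpos (a - b) = a"
proof -
  have "a - vpos (a - b) = a + inf (b - a) 0"
    unfolding vpos_def by (simp add: riesz.neg_sup_eq_inf)
  also have "\<dots> = inf a b"
    by (simp add: riesz.add_inf_distrib_left inf_commute)
  finally show ?thesis by (metis diff_add_cancel)
qed

lemma inf_add_le_add_inf:
  fixes u :: "'a::{ordered_real_vector, lattice}"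
  assumes "0 \<le> u" "0 \<le> a" "0 \<le> b"
  shows "inf u (a + b) \<le> inf u a + inf u b"
proof -
  define x where "x = inf u (a + b)"
  have "x \<le> u" "x \<le> a + b" unfolding x_def by simp_all
  have "x - inf u a = sup (x - u) (x - a)"
    by (simp add: riesz.neg_inf_eq_sup riesz.add_sup_distrib_left)
  also have "\<dots> \<le> inf u b"
  proof (rule sup_least)
    have "x - u \<le> 0" using \<open>x \<le> u\<close> by simp
    also have "0 \<le> inf u b" using assms by simp
    finally show "x - u \<le> inf u b" .
    have "x - a \<le> x" using assms(2) by simp
    then have "x - a \<le> u" using \<open>x \<le> u\<close> by (rule order_trans)
    moreover have "x - a \<le> b" using \<open>x \<le> a + b\<close> by (simp add: diff_le_eq add.commute)
    ultimately show "x - a \<le> inf u b" by simp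
  qed
  finally show ?thesis unfolding x_def by (metis diff_le_eq add.commute)
qed

lemma inf_add_right_eq_0:
  fixes p :: "'a::{ordered_real_vector, lattice}"
  assumes "0 \<le> p" "0 \<le> q" "0 \<le> r" "inf p q = 0" "inf p r = 0"
  shows "inf p (q + r) = 0"
  using inf_add_le_add_inf[OF assms(1-3)] assms by (simp add: antisym)

lemma scaleR_sup_distrib:
  fixes a b :: "'a::{ordered_real_vector, lattice}"
  assumes "0 \<le> c"
  shows "c *\<^sub>R sup a b = sup (c *\<^sub>R a) (c *\<^sub>R b)"
proof (cases "c = 0")
  case False
  with assms have c: "0 < c" by simp
  show ?thesis
  proof (rule antisym)
    have "a \<le> (1/c) *\<^sub>R sup (c *\<^sub>R a) (c *\<^sub>R b)" "b \<le> (1/c) *\<^sub>R sup (c *\<^sub>R a) (c *\<^sub>R b)"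
      using scaleR_left_mono[of "c *\<^sub>R a" "sup (c *\<^sub>R a) (c *\<^sub>R b)" "1/c"]
        scaleR_left_mono[of "c *\<^sub>R b" "sup (c *\<^sub>R a) (c *\<^sub>R b)" "1/c"] c
      by simp_all
    then have "sup a b \<le> (1/c) *\<^sub>R sup (c *\<^sub>R a) (c *\<^sub>R b)" by simp
    then have "c *\<^sub>R sup a b \<le> c *\<^sub>R ((1/c) *\<^sub>R sup (c *\<^sub>R a) (c *\<^sub>R b))"
      using assms by (rule scaleR_left_mono)
    then show "c *\<^sub>R sup a b \<le> sup (c *\<^sub>R a) (c *\<^sub>R b)" using c by simp
  qed (use assms in \<open>simp add: scaleR_left_mono\<close>)
qed simp

lemma scaleR_inf_distrib:
  fixes a b :: "'a::{ordered_real_vector, lattice}"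
  assumes "0 \<le> c"
  shows "c *\<^sub>R inf a b = inf (c *\<^sub>R a) (c *\<^sub>R b)"
proof -
  have "c *\<^sub>R inf a b = - (c *\<^sub>R sup (- a) (- b))"
    by (metis riesz.neg_sup_eq_inf minus_minus scaleR_minus_right)
  also have "\<dots> = - sup (- (c *\<^sub>R a)) (- (c *\<^sub>R b))"
    by (simp only: scaleR_sup_distrib[OF assms] scaleR_minus_right)
  also have "\<dots> = inf (c *\<^sub>R a) (c *\<^sub>R b)"
    by (simp only: riesz.neg_sup_eq_inf minus_minus)
  finally show ?thesis .
qed

lemma vpos_scaleR: "0 \<le> c \<Longrightarrow> vpos (c *\<^sub>R a) = c *\<^sub>R vpos a"
  unfolding vpos_def using scaleR_sup_distrib[of c a 0] by simp

lemma vneg_scaleR: "0 \<le> c \<Longrightarrow> vneg (c *\<^sub>R a) = c *\<^sub>R vneg a"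
  unfolding vneg_def using scaleR_sup_distrib[of c "- a" 0] by simp

lemma vabs_scaleR: "vabs (c *\<^sub>R a) = \<bar>c\<bar> *\<^sub>R vabs a"
proof (cases "0 \<le> c")
  case True
  then show ?thesis unfolding vabs_def using scaleR_sup_distrib[of c a "- a"] by simp
next
  case False
  then have "c *\<^sub>R a = - (\<bar>c\<bar> *\<^sub>R a)" by simp
  then show ?thesis
    unfolding vabs_def using scaleR_sup_distrib[of "\<bar>c\<bar>" a "- a"] by (simp add: sup_commute)
qed

lemma inf_scaleR_right_eq_0:
  fixes p q :: "'a::{ordered_real_vector, lattice}"
  assumes "0 \<le> p" "0 \<le> q" "inf p q = 0" "0 \<le> c"
  shows "inf p (c *\<^sub>R q) = 0"
proof (rule antisym)
  define k where "k = max 1 c"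
  have "p \<le> k *\<^sub>R p" using scaleR_right_mono[of 1 k p] assms(1) by (simp add: k_def)
  moreover have "c *\<^sub>R q \<le> k *\<^sub>R q" using scaleR_right_mono[of c k q] assms(2) by (simp add: k_def)
  ultimately have "inf p (c *\<^sub>R q) \<le> k *\<^sub>R inf p q"
    by (simp add: scaleR_inf_distrib k_def le_infI1 le_infI2)
  then show "inf p (c *\<^sub>R q) \<le> 0" using assms(3) by simp
qed (use assms in \<open>simp add: scaleR_nonneg_nonneg\<close>)

lemma inf_vpos_vneg_le_vpos_diff:
  assumes "0 \<le> r"
  shows "inf (vpos a) (vneg b) \<le> vpos (r *\<^sub>R a - b)"
proof -
  define v where "v = inf (vpos a) (vneg b)"
  have "r *\<^sub>R a + r *\<^sub>R vneg a = r *\<^sub>R vpos a"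
    using vpos_minus_vneg[of a] by (metis diff_add_cancel scaleR_right_distrib)
  then have "0 \<le> r *\<^sub>R a + r *\<^sub>R vneg a"
    using assms by (simp add: vpos_nonneg scaleR_nonneg_nonneg)
  then have "- b \<le> (r *\<^sub>R a - b) + r *\<^sub>R vneg a" by (simp add: algebra_simps)
  also have "\<dots> \<le> vpos (r *\<^sub>R a - b) + r *\<^sub>R vneg a" by (simp add: vpos_ge)
  finally have "- b \<le> vpos (r *\<^sub>R a - b) + r *\<^sub>R vneg a" .
  moreover have "0 \<le> vpos (r *\<^sub>R a - b) + r *\<^sub>R vneg a"
    using assms by (simp add: vpos_nonneg vneg_nonneg scaleR_nonneg_nonneg)
  ultimately have "vneg b \<le> vpos (r *\<^sub>R a - b) + r *\<^sub>R vneg a"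
    unfolding vneg_def by simp
  then have "v \<le> inf v (vpos (r *\<^sub>R a - b) + r *\<^sub>R vneg a)"
    unfolding v_def by (simp add: le_infI2)
  also have "\<dots> \<le> inf v (vpos (r *\<^sub>R a - b)) + inf v (r *\<^sub>R vneg a)"
    by (rule inf_add_le_add_inf) (simp_all add: v_def vpos_nonneg vneg_nonneg assms scaleR_nonneg_nonneg)
  also have "inf v (r *\<^sub>R vneg a) = 0"
  proof (rule antisym)
    have "inf v (r *\<^sub>R vneg a) \<le> inf (vpos a) (r *\<^sub>R vneg a)"
      unfolding v_def by (rule inf_mono) simp_all
    also have "\<dots> = 0"
      by (rule inf_scaleR_right_eq_0[OF vpos_nonneg vneg_nonneg inf_vpos_vneg assms])
    finally show "inf v (r *\<^sub>R vneg a) \<le> 0" .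
  qed (simp add: v_def vpos_nonneg vneg_nonneg assms scaleR_nonneg_nonneg)
  finally show ?thesis unfolding v_def by simp
qed

lemma vabs_diff_of_inf_eq_0:
  fixes p :: "'a::{ordered_real_vector, lattice}"
  assumes "inf p q = 0"
  shows "vabs (p - q) = p + q"
proof -
  have "(p + q) - vabs (p - q) = inf ((p + q) - (p - q)) ((p + q) + (p - q))"
    unfolding vabs_def by (simp add: riesz.add_inf_distrib_left inf_commute)
  also have "\<dots> = inf (2 *\<^sub>R q) (2 *\<^sub>R p)" by (simp add: scaleR_2 algebra_simps)
  also have "\<dots> = 2 *\<^sub>R inf q p" by (rule scaleR_inf_distrib[symmetric]) simp
  also have "\<dots> = 0" using assms by (simp add: inf_commute)
  finally show ?thesis by simp
qed

lemma vabs_add_of_sign_disjoint: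
  assumes "inf (vpos a) (vneg b) = 0" "inf (vpos b) (vneg a) = 0"
  shows "vabs (a + b) = vabs a + vabs b"
proof -
  have "inf (vpos a) (vneg a + vneg b) = 0" "inf (vpos b) (vneg a + vneg b) = 0"
    using assms inf_vpos_vneg[of a] inf_vpos_vneg[of b]
    by (simp_all add: inf_add_right_eq_0 vpos_nonneg vneg_nonneg)
  then have "inf (vneg a + vneg b) (vpos a + vpos b) = 0"
    by (simp add: inf_add_right_eq_0 inf_commute vpos_nonneg vneg_nonneg)
  then have "vabs ((vpos a + vpos b) - (vneg a + vneg b)) = (vpos a + vpos b) + (vneg a + vneg b)"
    by (simp add: vabs_diff_of_inf_eq_0 inf_commute)
  moreover have "(vpos a + vpos b) - (vneg a + vneg b) = a + b"
    using vpos_minus_vneg[of a] vpos_minus_vneg[of b] by (simp add: algebra_simps)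
  ultimately show ?thesis by (simp add: vabs_eq_vpos_plus_vneg algebra_simps)
qed

lemma clamp_remainder_le:
  assumes "0 \<le> w"
  shows "vabs (s - sup (inf s w) (- w)) \<le> vpos (s - w) + vpos (- s - w)"
proof -
  define R where "R = s - sup (inf s w) (- w)"
  have "R = inf (s - inf s w) (s + w)"
    unfolding R_def by (simp add: riesz.add_inf_distrib_left)
  also have "s - inf s w = vpos (s - w)"
    unfolding vpos_def by (simp add: riesz.add_sup_distrib_left sup_commute)
  finally have R: "R = inf (vpos (s - w)) (s + w)" .
  have "vpos R \<le> vpos (s - w)"
    using vpos_mono[of R "vpos (s - w)"] unfolding R by (simp add: vpos_of_nonneg vpos_nonneg)
  moreover have "vneg R \<le> vpos (- s - w)"
  proof -
    have "- R = sup (- vpos (s - w)) (- s - w)" unfolding R by simp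
    also have "\<dots> \<le> vpos (- s - w)"
      using vpos_ge[of "- s - w"] vpos_nonneg[of "s - w"] vpos_nonneg[of "- s - w"]
      by (simp add: order_trans[of _ 0])
    finally show ?thesis unfolding vneg_def by (simp add: vpos_nonneg)
  qed
  ultimately show ?thesis unfolding R_def vabs_eq_vpos_plus_vneg by (rule add_mono)
qed

section \<open>Disjointness and bands\<close>

lemma vdisj_sym: "vdisj x y \<longleftrightarrow> vdisj y x"
  unfolding vdisj_def by (simp add: inf_commute)

lemma vdisj_mono: "vabs x' \<le> vabs x \<Longrightarrow> vdisj x y \<Longrightarrow> vdisj x' y"
  unfolding vdisj_def by (metis antisym inf_mono order_refl riesz.abs_ge_zero le_infI)

lemma vdisj_zero: "vdisj 0 y"
  unfolding vdisj_def by (simp add: inf_absorb1)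

lemma vdisj_add:
  assumes "vdisj x y" "vdisj z y"
  shows "vdisj (x + z) y"
proof -
  have "inf (vabs y) (vabs (x + z)) \<le> inf (vabs y) (vabs x + vabs z)"
    by (rule inf_mono[OF order_refl riesz.abs_triangle_ineq])
  also have "\<dots> \<le> inf (vabs y) (vabs x) + inf (vabs y) (vabs z)"
    by (rule inf_add_le_add_inf) simp_all
  also have "\<dots> = 0" using assms unfolding vdisj_def by (simp add: inf_commute)
  finally show ?thesis unfolding vdisj_def by (simp add: inf_commute antisym)
qed

lemma vdisj_scaleR: "vdisj x y \<Longrightarrow> vdisj (c *\<^sub>R x) y"
  unfolding vdisj_def vabs_scaleR
  using inf_scaleR_right_eq_0[of "vabs y" "vabs x" "\<bar>c\<bar>"] by (simp add: inf_commute)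

lemma vdisj_self_imp_zero: "vdisj x x \<Longrightarrow> x = 0"
  unfolding vdisj_def by simp

lemma vdisj_vpos_vneg: "vdisj (vpos a) (vneg a)"
  unfolding vdisj_def by (simp add: riesz.abs_of_nonneg vpos_nonneg vneg_nonneg inf_vpos_vneg)

definition in_band :: "'a::{ordered_real_vector, lattice} \<Rightarrow> 'a \<Rightarrow> bool" where
  "in_band a z \<longleftrightarrow> (\<forall>g. vdisj g a \<longrightarrow> vdisj g z)"

lemma in_band_solid: "in_band a z \<Longrightarrow> vabs w \<le> vabs z \<Longrightarrow> in_band a w"
  unfolding in_band_def by (metis vdisj_sym vdisj_mono)

lemma in_band_of_le: "vabs z \<le> vabs a \<Longrightarrow> in_band a z"
  by (rule in_band_solid[of a a]) (simp_all add: in_band_def)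

lemma in_band_vabs: "in_band a z \<Longrightarrow> in_band a (vabs z)"
  by (erule in_band_solid) simp

lemma in_band_trans: "in_band a z \<Longrightarrow> in_band z w \<Longrightarrow> in_band a w"
  unfolding in_band_def by blast

lemma in_band_disj: "in_band a z \<Longrightarrow> vdisj a b \<Longrightarrow> vdisj z b"
  unfolding in_band_def by (metis vdisj_sym)

lemma band_preserving_in_band: "band_preserving T \<Longrightarrow> in_band z (T z)"
  unfolding in_band_def band_preserving_def by (metis vdisj_sym)

lemma in_band_split:
  assumes "in_band a z" "in_band (p + q) z" "vdisj a q"
  shows "in_band p z"
  unfolding in_band_def
proof (intro allI impI)
  fix g assume "vdisj g p"
  define h where "h = inf (vabs g) (vabs z)"
  have "0 \<le> h" unfolding h_def by simp
  then have hz: "vabs h \<le> vabs z" and hg: "vabs h \<le> vabs g"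
    unfolding h_def by (simp_all add: riesz.abs_of_nonneg)
  have "vdisj h q" using in_band_solid[OF assms(1) hz] assms(3) by (rule in_band_disj)
  moreover have "vdisj h p" using hg \<open>vdisj g p\<close> by (rule vdisj_mono)
  ultimately have "vdisj (p + q) h" using vdisj_add[of p h q] by (simp add: vdisj_sym)
  then have "vdisj h h" using in_band_solid[OF assms(2) hz] by (metis in_band_def vdisj_sym)
  then have "h = 0" by (rule vdisj_self_imp_zero)
  then show "vdisj g z" unfolding vdisj_def h_def .
qed

section \<open>Orthomorphisms\<close>

lemma Orth_linear: "T \<in> Orth \<Longrightarrow> linear T"
  unfolding Orth_def by simp

lemma Orth_band_preserving: "T \<in> Orth \<Longrightarrow> band_preserving T"
  unfolding Orth_def by simp

lemma Orth_add: "S \<in> Orth \<Longrightarrow> T \<in> Orth \<Longrightarrow> (\<lambda>x. S x + T x) \<in> Orth"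
  unfolding Orth_def
proof (intro CollectI conjI)
  assume S: "S \<in> {T. linear T \<and> order_bounded_op T \<and> band_preserving T}"
    and T: "T \<in> {T. linear T \<and> order_bounded_op T \<and> band_preserving T}"
  show "linear (\<lambda>x. S x + T x)" using S T by (simp add: linear_compose_add)
  show "order_bounded_op (\<lambda>x. S x + T x)" unfolding order_bounded_op_def
  proof (intro allI impI)
    fix a b :: 'a assume ab: "a \<le> b"
    obtain c1 d1 where 1: "\<And>x. a \<le> x \<and> x \<le> b \<Longrightarrow> c1 \<le> S x \<and> S x \<le> d1"
      using S ab unfolding order_bounded_op_def by blast
    obtain c2 d2 where 2: "\<And>x. a \<le> x \<and> x \<le> b \<Longrightarrow> c2 \<le> T x \<and> T x \<le> d2"
      using T ab unfolding order_bounded_op_def by blast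
    show "\<exists>c d. \<forall>x. a \<le> x \<and> x \<le> b \<longrightarrow> c \<le> S x + T x \<and> S x + T x \<le> d"
      using 1 2 add_mono by blast
  qed
  show "band_preserving (\<lambda>x. S x + T x)"
    using S T unfolding band_preserving_def by (simp add: vdisj_add)
qed

lemma Orth_scaleR: "T \<in> Orth \<Longrightarrow> (\<lambda>x. c *\<^sub>R T x) \<in> Orth"
  unfolding Orth_def
proof (intro CollectI conjI)
  assume T: "T \<in> {T. linear T \<and> order_bounded_op T \<and> band_preserving T}"
  show "linear (\<lambda>x. c *\<^sub>R T x)" using T by (simp add: linear_compose_scale_right)
  show "order_bounded_op (\<lambda>x. c *\<^sub>R T x)" unfolding order_bounded_op_def
  proof (intro allI impI)
    fix a b :: 'a assume ab: "a \<le> b"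
    obtain c1 d1 where 1: "\<And>x. a \<le> x \<and> x \<le> b \<Longrightarrow> c1 \<le> T x \<and> T x \<le> d1"
      using T ab unfolding order_bounded_op_def by blast
    show "\<exists>c' d. \<forall>x. a \<le> x \<and> x \<le> b \<longrightarrow> c' \<le> c *\<^sub>R T x \<and> c *\<^sub>R T x \<le> d"
    proof (cases "0 \<le> c")
      case True
      show ?thesis
        by (rule exI[of _ "c *\<^sub>R c1"], rule exI[of _ "c *\<^sub>R d1"]) (use 1 True scaleR_left_mono in blast)
    next
      case False
      then have "c \<le> 0" by simp
      show ?thesis
        by (rule exI[of _ "c *\<^sub>R d1"], rule exI[of _ "c *\<^sub>R c1"])
          (use 1 \<open>c \<le> 0\<close> scaleR_left_mono_neg in blast)
    qed
  qed
  show "band_preserving (\<lambda>x. c *\<^sub>R T x)"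
    using T unfolding band_preserving_def by (simp add: vdisj_scaleR)
qed

lemma Orth_zero: "(\<lambda>x. 0) \<in> Orth"
  unfolding Orth_def order_bounded_op_def band_preserving_def
  by (auto simp: vdisj_zero linear_zero)

definition interval_bound :: "('a::{ordered_real_vector, lattice} \<Rightarrow> 'a) \<Rightarrow> 'a \<Rightarrow> 'a \<Rightarrow> bool" where
  "interval_bound T x e \<longleftrightarrow> (\<forall>z. - x \<le> z \<and> z \<le> x \<longrightarrow> vabs (T z) \<le> e)"

lemma Orth_interval_bound:
  assumes "T \<in> Orth" "0 \<le> x"
  obtains e where "0 \<le> e" "interval_bound T x e"
proof -
  have "- x \<le> x" using assms(2) by (simp add: order_trans[of _ 0])
  then obtain c d where cd: "\<And>z. - x \<le> z \<and> z \<le> x \<Longrightarrow> c \<le> T z \<and> T z \<le> d"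
    using assms(1) unfolding Orth_def order_bounded_op_def by blast
  have "vabs (T z) \<le> vabs c + vabs d" if "- x \<le> z \<and> z \<le> x" for z
  proof (rule riesz.abs_leI)
    have "T z \<le> d" using cd[OF that] by simp
    then show "T z \<le> vabs c + vabs d"
      by (meson add_increasing order_trans riesz.abs_ge_self riesz.abs_ge_zero)
    have "- T z \<le> - c" using cd[OF that] by simp
    then show "- T z \<le> vabs c + vabs d"
      by (meson add_increasing2 order_trans riesz.abs_ge_minus_self riesz.abs_ge_zero)
  qed
  then show ?thesis using that[of "vabs c + vabs d"] unfolding interval_bound_def by simp
qed

lemma interval_bound_scaleR:
  assumes "interval_bound T x e" "linear T" "0 < \<delta>"
  shows "interval_bound T (\<delta> *\<^sub>R x) (\<delta> *\<^sub>R e)"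
  unfolding interval_bound_def
proof (intro allI impI)
  fix z assume z: "- (\<delta> *\<^sub>R x) \<le> z \<and> z \<le> \<delta> *\<^sub>R x"
  define z' where "z' = (1/\<delta>) *\<^sub>R z"
  have d0: "0 \<le> 1/\<delta>" using assms(3) by simp
  have "(1/\<delta>) *\<^sub>R (- (\<delta> *\<^sub>R x)) \<le> z'" "z' \<le> (1/\<delta>) *\<^sub>R (\<delta> *\<^sub>R x)"
    unfolding z'_def using z by (meson scaleR_left_mono d0)+
  then have "- x \<le> z'" "z' \<le> x" using assms(3) by simp_all
  then have "vabs (T z') \<le> e" using assms(1) unfolding interval_bound_def by blast
  moreover have "vabs (T z) = \<delta> *\<^sub>R vabs (T z')"
    unfolding z'_def using assms(2,3) by (simp add: linear_scale vabs_scaleR)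
  ultimately show "vabs (T z) \<le> \<delta> *\<^sub>R e" using assms(3) by (simp add: scaleR_left_mono)
qed

text \<open>The slicing step: \<open>y - r x\<close> is split into its clamp to \<open>[-\<delta> x, \<delta> x]\<close>, whose image is
  small, and a remainder living where \<open>y\<close> is at distance \<open>\<ge> \<delta> x\<close> from \<open>r x\<close>.\<close>

lemma Orth_slice_step:
  fixes T :: "'a::{ordered_real_vector, lattice} \<Rightarrow> 'a"
  assumes T: "T \<in> Orth" and x: "0 \<le> x" and e: "interval_bound T x e"
    and \<delta>: "0 < \<delta>" and r: "0 \<le> r"
  obtains R where "inf (vpos (T x)) (vneg (T y)) \<le> \<delta> *\<^sub>R e + vabs (T R)"
    and "in_band (vpos (y - (r + \<delta>) *\<^sub>R x) + vpos ((r - \<delta>) *\<^sub>R x - y)) (T R)"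
proof -
  have lin: "linear T" using T by (rule Orth_linear)
  define s where "s = y - r *\<^sub>R x"
  define w where "w = \<delta> *\<^sub>R x"
  define c where "c = sup (inf s w) (- w)"
  have w: "0 \<le> w" unfolding w_def using \<delta> x by (simp add: scaleR_nonneg_nonneg)
  have "- w \<le> c" "c \<le> w"
    unfolding c_def using w by (simp_all add: order_trans[of _ 0])
  then have Tc: "vabs (T c) \<le> \<delta> *\<^sub>R e"
    using interval_bound_scaleR[OF e lin \<delta>] unfolding interval_bound_def w_def by blast
  have "inf (vpos (T x)) (vneg (T y)) \<le> vpos (r *\<^sub>R T x - T y)"
    by (rule inf_vpos_vneg_le_vpos_diff[OF r])
  also have "\<dots> \<le> vabs (T c + T (s - c))"
    using vpos_le_vabs[of "r *\<^sub>R T x - T y"]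
    by (simp add: s_def linear_add[OF lin, symmetric] linear_diff[OF lin] linear_scale[OF lin]
        riesz.abs_minus_commute)
  also have "\<dots> \<le> \<delta> *\<^sub>R e + vabs (T (s - c))"
    using riesz.abs_triangle_ineq Tc by (rule order_trans[OF _ add_right_mono])
  finally have "inf (vpos (T x)) (vneg (T y)) \<le> \<delta> *\<^sub>R e + vabs (T (s - c))" .
  moreover have "in_band (vpos (s - w) + vpos (- s - w)) (T (s - c))"
  proof (rule in_band_trans[OF in_band_of_le band_preserving_in_band[OF Orth_band_preserving[OF T]]])
    show "vabs (s - c) \<le> vabs (vpos (s - w) + vpos (- s - w))"
      unfolding c_def using clamp_remainder_le[OF w, of s]
      by (simp add: riesz.abs_of_nonneg vpos_nonneg)
  qed
  moreover have "s - w = y - (r + \<delta>) *\<^sub>R x" "- s - w = (r - \<delta>) *\<^sub>R x - y"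
    unfolding s_def w_def by (simp_all add: scaleR_left_distrib scaleR_left_diff_distrib)
  ultimately show ?thesis using that by simp
qed

text \<open>Advancing from \<open>a\<close> to \<open>a + 2\<delta>\<close> by a slicing step at \<open>r = a + \<delta>\<close>: the band of
  \<open>(y - a x)\<^sup>+\<close> is disjoint from that of \<open>(a x - y)\<^sup>+\<close>, so the estimate survives in the band
  of \<open>(y - (a + 2\<delta>) x)\<^sup>+\<close>.\<close>

lemma Orth_slice_advance:
  fixes T :: "'a::{ordered_real_vector, lattice} \<Rightarrow> 'a"
  assumes T: "T \<in> Orth" and x: "0 \<le> x" and e: "interval_bound T x e" and \<delta>: "0 < \<delta>"
    and a: "0 \<le> a"
    and W: "inf (vpos (T x)) (vneg (T y)) \<le> \<delta> *\<^sub>R e + W" "0 \<le> W"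
      "W \<le> inf (vpos (T x)) (vneg (T y))" "in_band (vpos (y - a *\<^sub>R x)) W"
  obtains W' where "inf (vpos (T x)) (vneg (T y)) \<le> \<delta> *\<^sub>R e + W'" "0 \<le> W'"
    "W' \<le> inf (vpos (T x)) (vneg (T y))" "in_band (vpos (y - (a + 2 * \<delta>) *\<^sub>R x)) W'"
proof -
  have "0 \<le> a + \<delta>" using a \<delta> by simp
  then obtain R where R: "inf (vpos (T x)) (vneg (T y)) \<le> \<delta> *\<^sub>R e + vabs (T R)"
    "in_band (vpos (y - ((a + \<delta>) + \<delta>) *\<^sub>R x) + vpos (((a + \<delta>) - \<delta>) *\<^sub>R x - y)) (T R)"
    by (rule Orth_slice_step[OF T x e \<delta>])
  define W' where "W' = inf W (vabs (T R))"
  have "0 \<le> W'" unfolding W'_def using W(2) by simp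
  moreover have "inf (vpos (T x)) (vneg (T y)) \<le> \<delta> *\<^sub>R e + W'"
    using W(1) R(1) unfolding W'_def by (simp add: riesz.add_inf_distrib_left)
  moreover have "W' \<le> inf (vpos (T x)) (vneg (T y))"
    unfolding W'_def using W(3) by (meson inf_le1 order_trans)
  moreover have "in_band (vpos (y - (a + 2 * \<delta>) *\<^sub>R x)) W'"
  proof (rule in_band_split)
    show "in_band (vpos (y - a *\<^sub>R x)) W'"
      by (rule in_band_solid[OF W(4)]) (simp add: W'_def W(2) riesz.abs_of_nonneg)
    have "(a + \<delta>) + \<delta> = a + 2 * \<delta>" "(a + \<delta>) - \<delta> = a" by simp_all
    then have "in_band (vpos (y - (a + 2 * \<delta>) *\<^sub>R x) + vpos (a *\<^sub>R x - y)) (vabs (T R))"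
      using in_band_vabs[OF R(2)] by (simp only:)
    then show "in_band (vpos (y - (a + 2 * \<delta>) *\<^sub>R x) + vpos (a *\<^sub>R x - y)) W'"
      by (rule in_band_solid) (simp add: W'_def W(2) riesz.abs_of_nonneg)
    show "vdisj (vpos (y - a *\<^sub>R x)) (vpos (a *\<^sub>R x - y))"
      using vdisj_vpos_vneg[of "y - a *\<^sub>R x"] by (simp add: vpos_minus[symmetric])
  qed
  ultimately show ?thesis using that by blast
qed

lemma Orth_slice_iterate:
  fixes T :: "'a::{ordered_real_vector, lattice} \<Rightarrow> 'a"
  assumes T: "T \<in> Orth" and x: "0 \<le> x" and y: "0 \<le> y"
    and e: "interval_bound T x e" and e0: "0 \<le> e" and \<delta>: "0 < \<delta>"
  shows "\<exists>W. inf (vpos (T x)) (vneg (T y)) \<le> \<delta> *\<^sub>R e + W \<and> 0 \<le> W \<and>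
     W \<le> inf (vpos (T x)) (vneg (T y)) \<and> in_band (vpos (y - (2 * real k * \<delta>) *\<^sub>R x)) W"
proof (induction k)
  case 0
  define v where "v = inf (vpos (T x)) (vneg (T y))"
  have v0: "0 \<le> v" unfolding v_def by (simp add: vpos_nonneg vneg_nonneg)
  have "v \<le> vneg (T y)" unfolding v_def by (rule inf_le2)
  then have "vabs v \<le> vabs (T y)"
    using vneg_le_vabs[of "T y"] v0 by (simp add: riesz.abs_of_nonneg)
  then have "in_band y v"
    by (rule in_band_solid[OF band_preserving_in_band[OF Orth_band_preserving[OF T]]])
  then have "in_band (vpos (y - (2 * real 0 * \<delta>) *\<^sub>R x)) v"
    using y by (simp add: vpos_of_nonneg)
  moreover have "v \<le> \<delta> *\<^sub>R e + v" using \<delta> e0 by (simp add: scaleR_nonneg_nonneg)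
  ultimately show ?case using v0 unfolding v_def by blast
next
  case (Suc k)
  have "0 \<le> 2 * real k * \<delta>" using \<delta> by simp
  moreover have "2 * real k * \<delta> + 2 * \<delta> = 2 * real (Suc k) * \<delta>" by (simp add: algebra_simps)
  ultimately show ?case
    using Suc.IH Orth_slice_advance[OF T x e \<delta>, of "2 * real k * \<delta>" y] by metis
qed

text \<open>Splitting \<open>x = (x \<sqinter> y/K) + (x - y/K)\<^sup>+\<close>: the second summand is disjoint from
  \<open>(y - K x)\<^sup>+\<close>, so only the first, whose image is small, contributes to \<open>W\<close>.\<close>

lemma Orth_band_part_bound:
  fixes T :: "'a::{ordered_real_vector, lattice} \<Rightarrow> 'a"
  assumes T: "T \<in> Orth" and x: "0 \<le> x" and y: "0 \<le> y"
    and e: "interval_bound T y e" and e0: "0 \<le> e"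
    and K: "0 < K" and W0: "0 \<le> W" and Wx: "W \<le> vpos (T x)"
    and Wb: "in_band (vpos (y - K *\<^sub>R x)) W"
  shows "W \<le> (1/K) *\<^sub>R e"
proof -
  have lin: "linear T" using T by (rule Orth_linear)
  define m where "m = inf x ((1/K) *\<^sub>R y)"
  define p where "p = vpos (x - (1/K) *\<^sub>R y)"
  have Ky: "0 \<le> (1/K) *\<^sub>R y" using K y by (simp add: scaleR_nonneg_nonneg)
  have "- ((1/K) *\<^sub>R y) \<le> m" "m \<le> (1/K) *\<^sub>R y"
    unfolding m_def using Ky x by (simp_all add: order_trans[of _ 0])
  then have Tm: "vabs (T m) \<le> (1/K) *\<^sub>R e"
    using interval_bound_scaleR[OF e lin, of "1/K"] K unfolding interval_bound_def by simp
  have "p = vpos ((1/K) *\<^sub>R (K *\<^sub>R x - y))" unfolding p_def using K by (simp add: algebra_simps)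
  also have "\<dots> = (1/K) *\<^sub>R vpos (K *\<^sub>R x - y)" by (rule vpos_scaleR) (use K in simp)
  also have "vpos (K *\<^sub>R x - y) = vneg (y - K *\<^sub>R x)" using vpos_minus[of "y - K *\<^sub>R x"] by simp
  finally have "p = (1/K) *\<^sub>R vneg (y - K *\<^sub>R x)" .
  then have "vdisj p (vpos (y - K *\<^sub>R x))"
    using vdisj_scaleR[OF vdisj_vpos_vneg[of "y - K *\<^sub>R x", THEN vdisj_sym[THEN iffD1]]]
    by (simp add: vdisj_sym)
  then have "vdisj (T p) (vpos (y - K *\<^sub>R x))"
    by (rule in_band_disj[OF band_preserving_in_band[OF Orth_band_preserving[OF T]]])
  then have "vdisj (T p) W" using Wb unfolding in_band_def by blast
  then have Tp: "inf W (vabs (T p)) = 0"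
    unfolding vdisj_def using W0 by (simp add: riesz.abs_of_nonneg inf_commute)
  have "W \<le> vabs (T (m + p))"
    using Wx vpos_le_vabs order_trans unfolding m_def p_def inf_plus_vpos_diff by blast
  also have "\<dots> \<le> (1/K) *\<^sub>R e + vabs (T p)"
    unfolding linear_add[OF lin] using riesz.abs_triangle_ineq Tm
    by (rule order_trans[OF _ add_right_mono])
  finally have "W \<le> inf W ((1/K) *\<^sub>R e + vabs (T p))" by simp
  also have "\<dots> \<le> inf W ((1/K) *\<^sub>R e) + inf W (vabs (T p))"
    using K e0 by (intro inf_add_le_add_inf W0) (simp_all add: scaleR_nonneg_nonneg)
  finally show ?thesis using Tp by simp
qed

lemma Orth_vpos_inf_vneg_eq_0:
  fixes T :: "'a::{ordered_real_vector, lattice} \<Rightarrow> 'a"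
  assumes A: "vl_archimedean TYPE('a)" and T: "T \<in> Orth" and x: "0 \<le> x" and y: "0 \<le> y"
  shows "inf (vpos (T x)) (vneg (T y)) = 0"
proof -
  define v where "v = inf (vpos (T x)) (vneg (T y))"
  obtain ex where ex0: "0 \<le> ex" and ex: "interval_bound T x ex"
    using Orth_interval_bound[OF T x] by blast
  obtain ey where ey0: "0 \<le> ey" and ey: "interval_bound T y ey"
    using Orth_interval_bound[OF T y] by blast
  have "real n *\<^sub>R v \<le> ex + ey" for n
  proof (cases "n = 0")
    case True
    then show ?thesis using ex0 ey0 by simp
  next
    case False
    then have n1: "1 \<le> real n" by simp
    define \<delta> where "\<delta> = 1 / real n"
    have \<delta>: "0 < \<delta>" unfolding \<delta>_def using n1 by simp
    have K: "2 * real (n * n) * \<delta> = 2 * real n" unfolding \<delta>_def using n1 by simp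
    obtain W where W: "v \<le> \<delta> *\<^sub>R ex + W" "0 \<le> W" "W \<le> v"
      "in_band (vpos (y - (2 * real n) *\<^sub>R x)) W"
      using Orth_slice_iterate[OF T x y ex ex0 \<delta>, of "n * n"] unfolding v_def K by blast
    have "W \<le> vpos (T x)" using W(3) unfolding v_def by (meson inf_le1 order_trans)
    then have "W \<le> (1 / (2 * real n)) *\<^sub>R ey"
      using n1 by (intro Orth_band_part_bound[OF T x y ey ey0 _ W(2) _ W(4)]) simp_all
    also have "\<dots> \<le> \<delta> *\<^sub>R ey"
      unfolding \<delta>_def using n1 ey0 by (intro scaleR_right_mono) (simp_all add: frac_le)
    finally have "v \<le> \<delta> *\<^sub>R ex + \<delta> *\<^sub>R ey"
      using W(1) by (meson add_left_mono order_trans)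
    then have "v \<le> \<delta> *\<^sub>R (ex + ey)" by (simp add: scaleR_right_distrib)
    then have "real n *\<^sub>R v \<le> real n *\<^sub>R (\<delta> *\<^sub>R (ex + ey))" by (rule scaleR_left_mono) simp
    then show ?thesis unfolding \<delta>_def using n1 by simp
  qed
  moreover have "0 \<le> v" unfolding v_def by (simp add: vpos_nonneg vneg_nonneg)
  ultimately show ?thesis using A unfolding vl_archimedean_def v_def by blast
qed

lemma Orth_vabs_additive:
  fixes T :: "'a::{ordered_real_vector, lattice} \<Rightarrow> 'a"
  assumes "vl_archimedean TYPE('a)" "T \<in> Orth" "0 \<le> x" "0 \<le> y"
  shows "vabs (T (x + y)) = vabs (T x) + vabs (T y)"
  using vabs_add_of_sign_disjoint[OF Orth_vpos_inf_vneg_eq_0[OF assms] Orth_vpos_inf_vneg_eq_0[OF assms(1,2,4,3)]]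
  by (simp add: linear_add[OF Orth_linear[OF assms(2)]])

section \<open>The modulus of an orthomorphism\<close>

definition orth_abs :: "('a::{ordered_real_vector, lattice} \<Rightarrow> 'a) \<Rightarrow> 'a \<Rightarrow> 'a" where
  "orth_abs T x = vabs (T (vpos x)) - vabs (T (vneg x))"

lemma orth_abs_of_nonneg: "linear T \<Longrightarrow> 0 \<le> x \<Longrightarrow> orth_abs T x = vabs (T x)"
  unfolding orth_abs_def by (simp add: vpos_of_nonneg vneg_of_nonneg linear_0)

lemma orth_abs_minus: "orth_abs T (- x) = - orth_abs T x"
  unfolding orth_abs_def vpos_minus by (simp add: vpos_def vneg_def)

lemma orth_abs_linear:
  fixes T :: "'a::{ordered_real_vector, lattice} \<Rightarrow> 'a"
  assumes A: "vl_archimedean TYPE('a)" and T: "T \<in> Orth"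
  shows "linear (orth_abs T)"
proof (rule linearI)
  fix x y :: 'a
  have "vpos (x + y) + (vneg x + vneg y) = vneg (x + y) + (vpos x + vpos y)"
    using vpos_minus_vneg[of "x + y"] vpos_minus_vneg[of x] vpos_minus_vneg[of y]
    by (simp add: algebra_simps)
  then have "vabs (T (vpos (x + y))) + (vabs (T (vneg x)) + vabs (T (vneg y))) =
      vabs (T (vneg (x + y))) + (vabs (T (vpos x)) + vabs (T (vpos y)))"
    by (metis Orth_vabs_additive[OF A T] vpos_nonneg vneg_nonneg add_nonneg_nonneg)
  then show "orth_abs T (x + y) = orth_abs T x + orth_abs T y"
    unfolding orth_abs_def by (simp add: algebra_simps)
next
  have pos_hom: "orth_abs T (c *\<^sub>R x) = c *\<^sub>R orth_abs T x" if "0 \<le> c" for c and x :: 'a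
    unfolding orth_abs_def using that Orth_linear[OF T]
    by (simp add: vpos_scaleR vneg_scaleR linear_scale vabs_scaleR scaleR_diff_right)
  fix c :: real and x :: 'a
  show "orth_abs T (c *\<^sub>R x) = c *\<^sub>R orth_abs T x"
  proof (cases "0 \<le> c")
    case False
    then have "orth_abs T (c *\<^sub>R x) = \<bar>c\<bar> *\<^sub>R orth_abs T (- x)"
      using pos_hom[of "\<bar>c\<bar>" "- x"] by simp
    with False show ?thesis by (simp add: orth_abs_minus)
  qed (rule pos_hom)
qed

lemma vabs_orth_abs_le:
  fixes T :: "'a::{ordered_real_vector, lattice} \<Rightarrow> 'a"
  assumes A: "vl_archimedean TYPE('a)" and T: "T \<in> Orth"
  shows "vabs (orth_abs T x) \<le> vabs (T (vabs x))"
proof -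
  have "vabs (orth_abs T x) \<le> vabs (T (vpos x)) + vabs (T (vneg x))"
    unfolding orth_abs_def
    using riesz.abs_triangle_ineq4[of "vabs (T (vpos x))" "vabs (T (vneg x))"] by simp
  also have "\<dots> = vabs (T (vabs x))"
    unfolding vabs_eq_vpos_plus_vneg[of x] by (simp add: Orth_vabs_additive[OF A T] vpos_nonneg vneg_nonneg)
  finally show ?thesis .
qed

lemma orth_abs_Orth:
  fixes T :: "'a::{ordered_real_vector, lattice} \<Rightarrow> 'a"
  assumes A: "vl_archimedean TYPE('a)" and T: "T \<in> Orth"
  shows "orth_abs T \<in> Orth"
  unfolding Orth_def
proof (intro CollectI conjI)
  show lin: "linear (orth_abs T)" by (rule orth_abs_linear[OF A T])
  have "orth_abs T a \<le> orth_abs T b" if "a \<le> b" for a b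
  proof -
    have "orth_abs T b - orth_abs T a = vabs (T (b - a))"
      using that by (simp add: linear_diff[OF lin, symmetric] orth_abs_of_nonneg Orth_linear[OF T])
    then show ?thesis by (metis riesz.abs_ge_zero diff_ge_0_iff_ge)
  qed
  then show "order_bounded_op (orth_abs T)" unfolding order_bounded_op_def by blast
  show "band_preserving (orth_abs T)" unfolding band_preserving_def
  proof (intro allI impI)
    fix x y :: 'a assume "vdisj x y"
    then have "vdisj (vabs x) y" by (rule vdisj_mono[rotated]) simp
    then have "vdisj (T (vabs x)) y"
      using Orth_band_preserving[OF T] unfolding band_preserving_def by blast
    then show "vdisj (orth_abs T x) y" by (rule vdisj_mono[OF vabs_orth_abs_le[OF A T]])
  qed
qed

lemma orth_sup_of_orth_abs:
  fixes T :: "'a::{ordered_real_vector, lattice} \<Rightarrow> 'a"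
  assumes A: "vl_archimedean TYPE('a)" and T: "T \<in> Orth"
  shows "orth_sup_of (orth_abs T) T (\<lambda>x. - T x)"
  unfolding orth_sup_of_def orth_le_def
  using orth_abs_Orth[OF A T] orth_abs_of_nonneg[OF Orth_linear[OF T]]
  by (simp add: riesz.abs_le_iff riesz.abs_ge_self riesz.abs_ge_minus_self)

lemma sup_eq_half_sum_vabs: "sup a b = (1/2::real) *\<^sub>R (a + (b + vabs (b - a)))"
proof -
  have "a + (b + vabs (b - a)) = 2 *\<^sub>R (a + vpos (b - a))"
    by (simp add: vabs_eq_double_vpos scaleR_2 algebra_simps)
  also have "a + vpos (b - a) = sup a b"
    unfolding vpos_def riesz.add_sup_distrib_left by (simp add: sup_commute)
  finally show ?thesis by simp
qed

lemma orth_sup_of_half_sum: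
  fixes S T :: "'a::{ordered_real_vector, lattice} \<Rightarrow> 'a"
  assumes A: "vl_archimedean TYPE('a)" and S: "S \<in> Orth" and T: "T \<in> Orth"
  defines "D \<equiv> \<lambda>x. T x + (-1::real) *\<^sub>R S x"
  shows "orth_sup_of (\<lambda>x. (1/2::real) *\<^sub>R (S x + (T x + orth_abs D x))) S T"
proof -
  have D: "D \<in> Orth" unfolding D_def by (intro Orth_add Orth_scaleR S T)
  have "(\<lambda>x. (1/2::real) *\<^sub>R (S x + (T x + orth_abs D x))) \<in> Orth"
    by (intro Orth_add Orth_scaleR S T orth_abs_Orth[OF A D])
  moreover have "(1/2::real) *\<^sub>R (S x + (T x + orth_abs D x)) = sup (S x) (T x)" if "0 \<le> x" for x
    using orth_abs_of_nonneg[OF Orth_linear[OF D] that]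
    by (simp add: D_def sup_eq_half_sum_vabs)
  ultimately show ?thesis unfolding orth_sup_of_def orth_le_def by simp
qed

lemma orth_vector_sublatticeI:
  fixes A :: "('a::{ordered_real_vector, lattice} \<Rightarrow> 'a) set"
  assumes arch: "vl_archimedean TYPE('a)" and sub: "A \<subseteq> Orth"
    and zero: "(\<lambda>x. 0) \<in> A"
    and add: "\<forall>S\<in>A. \<forall>T\<in>A. (\<lambda>x. S x + T x) \<in> A"
    and scale: "\<forall>c::real. \<forall>T\<in>A. (\<lambda>x. c *\<^sub>R T x) \<in> A"
    and abs: "\<forall>T\<in>A. orth_abs T \<in> A"
  shows "orth_vector_sublattice A \<and> (\<forall>T\<in>A. \<exists>R\<in>A. orth_sup_of R T (\<lambda>x. - T x))"
proof -
  have "\<exists>R\<in>A. orth_sup_of R S T" if S: "S \<in> A" and T: "T \<in> A" for S T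
  proof -
    define D where "D = (\<lambda>x. T x + (-1::real) *\<^sub>R S x)"
    have "(\<lambda>x. (-1::real) *\<^sub>R S x) \<in> A" using scale S by blast
    then have D: "D \<in> A" unfolding D_def by (rule bspec[OF bspec[OF add T]])
    define R where "R = (\<lambda>x. (1/2::real) *\<^sub>R (S x + (T x + orth_abs D x)))"
    have "(\<lambda>x. T x + orth_abs D x) \<in> A" using abs D by (intro bspec[OF bspec[OF add T]]) blast
    then have "(\<lambda>x. S x + (T x + orth_abs D x)) \<in> A" by (rule bspec[OF bspec[OF add S]])
    then have "R \<in> A" unfolding R_def by (rule bspec[OF spec[OF scale]])
    moreover have "orth_sup_of R S T"
      unfolding R_def D_def using S T sub by (intro orth_sup_of_half_sum[OF arch]) auto
    ultimately show ?thesis by blast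
  qed
  moreover have "\<forall>T\<in>A. \<exists>R\<in>A. orth_sup_of R T (\<lambda>x. - T x)"
    using abs sub orth_sup_of_orth_abs[OF arch] by blast
  ultimately show ?thesis unfolding orth_vector_sublattice_def using sub zero add scale by blast
qed

section \<open>Bounded sets and continuity in locally solid topologies\<close>

lemma zero_nbhd_Int: "zero_nbhd \<tau> U \<Longrightarrow> zero_nbhd \<tau> V \<Longrightarrow> zero_nbhd \<tau> (U \<inter> V)"
  unfolding zero_nbhd_def by (metis Int_iff Int_mono openin_Int)

lemma zero_nbhd_UNIV: "linear_topology \<tau> \<Longrightarrow> zero_nbhd \<tau> UNIV"
  unfolding zero_nbhd_def linear_topology_def by (metis UNIV_I openin_topspace subset_UNIV)

lemma zero_nbhd_sum_subset:
  assumes L: "linear_topology \<tau>" and U: "zero_nbhd \<tau> U"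
  obtains W where "zero_nbhd \<tau> W" "\<And>a b. a \<in> W \<Longrightarrow> b \<in> W \<Longrightarrow> a + b \<in> U"
proof -
  obtain V where V: "openin \<tau> V" "0 \<in> V" "V \<subseteq> U" using U unfolding zero_nbhd_def by blast
  have top: "topspace \<tau> = UNIV"
    and add: "continuous_map (prod_topology \<tau> \<tau>) \<tau> (\<lambda>(x, y). x + y)"
    using L unfolding linear_topology_def by auto
  have "openin (prod_topology \<tau> \<tau>) {p \<in> topspace (prod_topology \<tau> \<tau>). (\<lambda>(x, y). x + y) p \<in> V}"
    by (rule openin_continuous_map_preimage[OF add V(1)])
  moreover have "{p \<in> topspace (prod_topology \<tau> \<tau>). (\<lambda>(x, y). x + y) p \<in> V} = {p. (\<lambda>(x, y). x + y) p \<in> V}"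
    using top by (simp only: topspace_prod_topology UNIV_Times_UNIV mem_Collect_eq UNIV_I simp_thms)
  ultimately have preimage: "openin (prod_topology \<tau> \<tau>) {p. (\<lambda>(x, y). x + y) p \<in> V}" by simp
  have "(0, 0) \<in> {p. (\<lambda>(x, y). x + y) p \<in> V}" using V(2) by simp
  then have "\<exists>V1 V2. openin \<tau> V1 \<and> openin \<tau> V2 \<and> 0 \<in> V1 \<and> 0 \<in> V2 \<and>
      V1 \<times> V2 \<subseteq> {p. (\<lambda>(x, y). x + y) p \<in> V}"
    by (rule preimage[unfolded openin_prod_topology_alt, rule_format])
  then obtain V1 V2 where "openin \<tau> V1" "openin \<tau> V2" "0 \<in> V1" "0 \<in> V2"
    and V12: "V1 \<times> V2 \<subseteq> {p. (\<lambda>(x, y). x + y) p \<in> V}" by blast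
  then have "zero_nbhd \<tau> (V1 \<inter> V2)" unfolding zero_nbhd_def by blast
  moreover have "a + b \<in> U" if "a \<in> V1 \<inter> V2" "b \<in> V1 \<inter> V2" for a b
  proof -
    have "(a, b) \<in> V1 \<times> V2" using that by blast
    then have "a + b \<in> V" using V12 by auto
    then show ?thesis using V(3) by blast
  qed
  ultimately show ?thesis by (rule that)
qed

lemma top_bounded_subset: "top_bounded \<tau> B \<Longrightarrow> B' \<subseteq> B \<Longrightarrow> top_bounded \<tau> B'"
  unfolding top_bounded_def by (meson order_trans)

lemma top_bounded_zero: "top_bounded \<tau> {0}"
  unfolding top_bounded_def
proof (intro allI impI)
  fix U assume "zero_nbhd \<tau> U"
  then have "{0} \<subseteq> (\<lambda>x. 1 *\<^sub>R x) ` U" unfolding zero_nbhd_def by force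
  then show "\<exists>c>0. {0} \<subseteq> (\<lambda>x. c *\<^sub>R x) ` U" by (meson zero_less_one)
qed

lemma top_bounded_scaleR_pos:
  assumes "top_bounded \<tau> B" "0 < k"
  shows "top_bounded \<tau> ((\<lambda>x. k *\<^sub>R x) ` B)"
  unfolding top_bounded_def
proof (intro allI impI)
  fix U assume "zero_nbhd \<tau> U"
  then obtain c where "c > 0" and c: "B \<subseteq> (\<lambda>x. c *\<^sub>R x) ` U"
    using assms(1) unfolding top_bounded_def by blast
  have "(\<lambda>x. k *\<^sub>R x) ` B \<subseteq> (\<lambda>x. (k * c) *\<^sub>R x) ` U"
  proof
    fix z assume "z \<in> (\<lambda>x. k *\<^sub>R x) ` B"
    then obtain u where "u \<in> U" "z = k *\<^sub>R (c *\<^sub>R u)" using c by blast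
    then show "z \<in> (\<lambda>x. (k * c) *\<^sub>R x) ` U" by (auto simp: image_iff)
  qed
  then show "\<exists>c>0. (\<lambda>x. k *\<^sub>R x) ` B \<subseteq> (\<lambda>x. c *\<^sub>R x) ` U" using \<open>c > 0\<close> assms(2) by (meson mult_pos_pos)
qed

lemma locally_solid_linear_topology: "locally_solid \<tau> \<Longrightarrow> linear_topology \<tau>"
  unfolding locally_solid_def by simp

lemma locally_solid_nbhdE:
  assumes "locally_solid \<tau>" "zero_nbhd \<tau> U"
  obtains V where "zero_nbhd \<tau> V" "solid_set V" "V \<subseteq> U"
  using assms unfolding locally_solid_def by blast

lemma solid_set_scaleR:
  assumes "solid_set W" "w \<in> W" "\<bar>t\<bar> \<le> 1"
  shows "t *\<^sub>R w \<in> W"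
proof -
  have "vabs (t *\<^sub>R w) \<le> vabs w"
    using scaleR_right_mono[OF assms(3) riesz.abs_ge_zero[of w]] by (simp add: vabs_scaleR)
  then show ?thesis using assms(1,2) unfolding solid_set_def by blast
qed

lemma solid_set_vabs: "solid_set W \<Longrightarrow> w \<in> W \<Longrightarrow> vabs w \<in> W"
  unfolding solid_set_def by (metis order_refl riesz.abs_idempotent)

lemma top_bounded_dominated:
  assumes LS: "locally_solid \<tau>" and B: "top_bounded \<tau> B"
    and dom: "\<forall>x\<in>B'. \<exists>b\<in>B. vabs x \<le> vabs b"
  shows "top_bounded \<tau> B'"
  unfolding top_bounded_def
proof (intro allI impI)
  fix U assume "zero_nbhd \<tau> U"
  then obtain W where W: "zero_nbhd \<tau> W" "solid_set W" "W \<subseteq> U" by (rule locally_solid_nbhdE[OF LS])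
  obtain c where c: "c > 0" "B \<subseteq> (\<lambda>x. c *\<^sub>R x) ` W" using B W(1) unfolding top_bounded_def by blast
  have "x \<in> (\<lambda>x. c *\<^sub>R x) ` U" if "x \<in> B'" for x
  proof -
    obtain b where b: "b \<in> B" "vabs x \<le> vabs b" using dom \<open>x \<in> B'\<close> by blast
    obtain w where w: "w \<in> W" "b = c *\<^sub>R w" using c(2) b(1) by blast
    have "vabs ((1/c) *\<^sub>R x) \<le> (1/c) *\<^sub>R vabs b" using c(1) b(2) by (simp add: vabs_scaleR scaleR_left_mono)
    also have "\<dots> = vabs w" using c(1) w(2) by (simp add: vabs_scaleR)
    finally have "(1/c) *\<^sub>R x \<in> U" using W w(1) unfolding solid_set_def by blast
    moreover have "x = c *\<^sub>R ((1/c) *\<^sub>R x)" using c(1) by simp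
    ultimately show ?thesis by blast
  qed
  then show "\<exists>c>0. B' \<subseteq> (\<lambda>x. c *\<^sub>R x) ` U" using c(1) by blast
qed

lemma top_bounded_scaleR:
  assumes LS: "locally_solid \<tau>" and B: "top_bounded \<tau> B"
  shows "top_bounded \<tau> ((\<lambda>x. t *\<^sub>R x) ` B)"
proof (rule top_bounded_dominated[OF LS top_bounded_scaleR_pos[OF B, of "\<bar>t\<bar> + 1"]])
  have "vabs (t *\<^sub>R b) \<le> vabs ((\<bar>t\<bar> + 1) *\<^sub>R b)" for b
    by (simp add: vabs_scaleR scaleR_right_mono)
  then show "\<forall>x\<in>(\<lambda>x. t *\<^sub>R x) ` B. \<exists>b\<in>(\<lambda>x. (\<bar>t\<bar> + 1) *\<^sub>R x) ` B. vabs x \<le> vabs b" by blast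
qed simp

lemma top_bounded_sums:
  assumes LS: "locally_solid \<tau>" and B1: "top_bounded \<tau> B1" and B2: "top_bounded \<tau> B2"
  shows "top_bounded \<tau> {a + b | a b. a \<in> B1 \<and> b \<in> B2}"
  unfolding top_bounded_def
proof (intro allI impI)
  fix U assume "zero_nbhd \<tau> U"
  then obtain W where W: "zero_nbhd \<tau> W" "\<And>a b. a \<in> W \<Longrightarrow> b \<in> W \<Longrightarrow> a + b \<in> U"
    using zero_nbhd_sum_subset[OF locally_solid_linear_topology[OF LS]] by blast
  obtain W' where W': "zero_nbhd \<tau> W'" "solid_set W'" "W' \<subseteq> W" by (rule locally_solid_nbhdE[OF LS W(1)])
  obtain c1 where c1: "c1 > 0" "B1 \<subseteq> (\<lambda>x. c1 *\<^sub>R x) ` W'" using B1 W'(1) unfolding top_bounded_def by blast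
  obtain c2 where c2: "c2 > 0" "B2 \<subseteq> (\<lambda>x. c2 *\<^sub>R x) ` W'" using B2 W'(1) unfolding top_bounded_def by blast
  define c where "c = max c1 c2"
  have "c > 0" unfolding c_def using c1 by simp
  have enlarge: "B \<subseteq> (\<lambda>x. c *\<^sub>R x) ` W'"
    if B: "B \<subseteq> (\<lambda>x. d *\<^sub>R x) ` W'" and d: "0 < d" "d \<le> c" for B d
  proof
    fix x assume "x \<in> B"
    then obtain w where w: "w \<in> W'" "x = d *\<^sub>R w" using B by blast
    have "(d / c) *\<^sub>R w \<in> W'" using d \<open>c > 0\<close> by (intro solid_set_scaleR[OF W'(2) w(1)]) simp
    moreover have "x = c *\<^sub>R ((d / c) *\<^sub>R w)" using w(2) \<open>c > 0\<close> by simp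
    ultimately show "x \<in> (\<lambda>x. c *\<^sub>R x) ` W'" by blast
  qed
  have b1: "B1 \<subseteq> (\<lambda>x. c *\<^sub>R x) ` W'" and b2: "B2 \<subseteq> (\<lambda>x. c *\<^sub>R x) ` W'"
    using enlarge[OF c1(2) c1(1)] enlarge[OF c2(2) c2(1)] by (simp_all add: c_def)
  then have "{a + b | a b. a \<in> B1 \<and> b \<in> B2} \<subseteq> (\<lambda>x. c *\<^sub>R x) ` U"
  proof (intro subsetI)
    fix z assume "z \<in> {a + b | a b. a \<in> B1 \<and> b \<in> B2}"
    then obtain w1 w2 where "w1 \<in> W'" "w2 \<in> W'" "z = c *\<^sub>R w1 + c *\<^sub>R w2"
      using b1 b2 by blast
    moreover from this have "w1 + w2 \<in> U" using W(2) W'(3) by blast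
    ultimately show "z \<in> (\<lambda>x. c *\<^sub>R x) ` U" by (simp add: scaleR_right_distrib[symmetric] image_iff) blast
  qed
  then show "\<exists>c>0. {a + b | a b. a \<in> B1 \<and> b \<in> B2} \<subseteq> (\<lambda>x. c *\<^sub>R x) ` U" using \<open>c > 0\<close> by blast
qed

lemma linear_topology_continuous_add:
  assumes "linear_topology \<tau>" "continuous_map \<tau> \<tau> f" "continuous_map \<tau> \<tau> g"
  shows "continuous_map \<tau> \<tau> (\<lambda>x. f x + g x)"
proof -
  have "continuous_map (prod_topology \<tau> \<tau>) \<tau> (\<lambda>(x, y). x + y)"
    using assms(1) unfolding linear_topology_def by blast
  then have "continuous_map \<tau> \<tau> ((\<lambda>(x, y). x + y) \<circ> (\<lambda>x. (f x, g x)))"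
    by (rule continuous_map_compose[OF continuous_map_pairedI[OF assms(2,3)]])
  then show ?thesis by (simp add: o_def)
qed

lemma linear_topology_continuous_scaleR:
  assumes "linear_topology \<tau>" "continuous_map \<tau> \<tau> f"
  shows "continuous_map \<tau> \<tau> (\<lambda>x. t *\<^sub>R f x)"
proof -
  have "continuous_map \<tau> euclideanreal (\<lambda>x. t)" by simp
  moreover have "continuous_map (prod_topology euclideanreal \<tau>) \<tau> (\<lambda>(c, x). c *\<^sub>R x)"
    using assms(1) unfolding linear_topology_def by blast
  ultimately have "continuous_map \<tau> \<tau> ((\<lambda>(c, x). c *\<^sub>R x) \<circ> (\<lambda>x. (t, f x)))"
    by (rule continuous_map_compose[OF continuous_map_pairedI[OF _ assms(2)]])
  then show ?thesis by (simp add: o_def)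
qed

lemma continuous_map_vabs_nonexpansive:
  assumes LS: "locally_solid \<tau>" and f: "\<And>a b. vabs (f a - f b) \<le> vabs (a - b)"
  shows "continuous_map \<tau> \<tau> f"
proof -
  have L: "linear_topology \<tau>" by (rule locally_solid_linear_topology[OF LS])
  then have top: "topspace \<tau> = UNIV" unfolding linear_topology_def by blast
  have "continuous_map \<tau> \<tau> (\<lambda>x. x + k)" for k
    using linear_topology_continuous_add[OF L continuous_map_id[unfolded id_def]] top by simp
  then have shift: "openin \<tau> {x. x + k \<in> G}" if "openin \<tau> G" for G k
    using openin_continuous_map_preimage[OF _ that] top by fastforce
  have "openin \<tau> {x. f x \<in> G}" if G: "openin \<tau> G" for G
  proof (subst openin_subopen, intro ballI)
    fix a assume a: "a \<in> {x. f x \<in> G}"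
    have "zero_nbhd \<tau> {z. z + f a \<in> G}" unfolding zero_nbhd_def using shift[OF G, of "f a"] a by auto
    then obtain W where W: "zero_nbhd \<tau> W" "solid_set W" "W \<subseteq> {z. z + f a \<in> G}"
      by (rule locally_solid_nbhdE[OF LS])
    obtain V where V: "openin \<tau> V" "0 \<in> V" "V \<subseteq> W" using W(1) unfolding zero_nbhd_def by blast
    have "f z \<in> G" if "z + - a \<in> V" for z
    proof -
      have "f z - f a \<in> W" using that V(3) W(2) f[of z a] unfolding solid_set_def by auto
      then show ?thesis using W(3) by auto
    qed
    then show "\<exists>T. openin \<tau> T \<and> a \<in> T \<and> T \<subseteq> {x. f x \<in> G}"
      using shift[OF V(1), of "- a"] V(2) by (intro exI[of _ "{z. z + - a \<in> V}"]) auto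
  qed
  then show ?thesis unfolding continuous_map_def using top by simp
qed

lemma continuous_map_vabs: "locally_solid \<tau> \<Longrightarrow> continuous_map \<tau> \<tau> vabs"
  by (rule continuous_map_vabs_nonexpansive, assumption, rule riesz.abs_triangle_ineq3)

lemma continuous_map_vpos:
  assumes "locally_solid \<tau>"
  shows "continuous_map \<tau> \<tau> vpos"
proof -
  have eq: "vpos = (\<lambda>x. (1/2::real) *\<^sub>R (x + vabs x))"
    by (rule ext) (simp add: vabs_eq_double_vpos)
  have "linear_topology \<tau>" by (rule locally_solid_linear_topology[OF assms])
  then show ?thesis unfolding eq
    by (intro linear_topology_continuous_scaleR linear_topology_continuous_add continuous_map_vabs[OF assms])
      (simp_all add: continuous_map_id[unfolded id_def])
qed

lemma continuous_map_orth_abs: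
  assumes LS: "locally_solid \<tau>" and T: "continuous_map \<tau> \<tau> T"
  shows "continuous_map \<tau> \<tau> (orth_abs T)"
proof -
  have L: "linear_topology \<tau>" by (rule locally_solid_linear_topology[OF LS])
  have vabs_T: "continuous_map \<tau> \<tau> (\<lambda>x. vabs (T (g x)))" if "continuous_map \<tau> \<tau> g" for g
    using continuous_map_compose[OF continuous_map_compose[OF that T] continuous_map_vabs[OF LS]]
    by (simp add: o_def)
  have "continuous_map \<tau> \<tau> (\<lambda>x. (-1::real) *\<^sub>R x)"
    by (rule linear_topology_continuous_scaleR[OF L continuous_map_id[unfolded id_def]])
  then have "continuous_map \<tau> \<tau> (vpos \<circ> (\<lambda>x. (-1::real) *\<^sub>R x))"
    by (rule continuous_map_compose[OF _ continuous_map_vpos[OF LS]])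
  moreover have "vpos \<circ> (\<lambda>x. (-1::real) *\<^sub>R x) = vneg"
    by (rule ext) (simp add: vpos_minus)
  ultimately have "continuous_map \<tau> \<tau> vneg" by metis
  then have "continuous_map \<tau> \<tau> (\<lambda>x. (-1::real) *\<^sub>R vabs (T (vneg x)))"
    by (intro linear_topology_continuous_scaleR[OF L] vabs_T)
  then have "continuous_map \<tau> \<tau> (\<lambda>x. vabs (T (vpos x)) + (-1::real) *\<^sub>R vabs (T (vneg x)))"
    by (rule linear_topology_continuous_add[OF L vabs_T[OF continuous_map_vpos[OF LS]]])
  then show ?thesis unfolding orth_abs_def by simp
qed

section \<open>The three spaces of bounded orthomorphisms\<close>

lemma top_bounded_orth_abs_image:
  fixes \<tau> :: "'a::{ordered_real_vector, lattice} topology"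
  assumes "vl_archimedean TYPE('a)" "locally_solid \<tau>" "T \<in> Orth" "top_bounded \<tau> (T ` vabs ` B)"
  shows "top_bounded \<tau> (orth_abs T ` B)"
  using vabs_orth_abs_le[OF assms(1,3)] by (intro top_bounded_dominated[OF assms(2,4)]) blast

lemma Orth_n_sublattice:
  fixes \<tau> :: "'a::{ordered_real_vector, lattice} topology"
  assumes A: "vl_archimedean TYPE('a)" and LS: "locally_solid \<tau>"
  shows "orth_vector_sublattice (Orth_n \<tau>) \<and> (\<forall>T\<in>Orth_n \<tau>. \<exists>R\<in>Orth_n \<tau>. orth_sup_of R T (\<lambda>x. - T x))"
proof (rule orth_vector_sublatticeI[OF A])
  show "Orth_n \<tau> \<subseteq> Orth" unfolding Orth_n_def by blast
  have "top_bounded \<tau> ((\<lambda>x. 0::'a) ` UNIV)"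
    by (rule top_bounded_subset[OF top_bounded_zero]) blast
  then show "(\<lambda>x. 0) \<in> Orth_n \<tau>"
    unfolding Orth_n_def using Orth_zero zero_nbhd_UNIV[OF locally_solid_linear_topology[OF LS]] by blast
  show "\<forall>S\<in>Orth_n \<tau>. \<forall>T\<in>Orth_n \<tau>. (\<lambda>x. S x + T x) \<in> Orth_n \<tau>"
  proof (intro ballI)
    fix S T assume S: "S \<in> Orth_n \<tau>" and T: "T \<in> Orth_n \<tau>"
    obtain U1 where U1: "zero_nbhd \<tau> U1" "top_bounded \<tau> (S ` U1)" using S unfolding Orth_n_def by blast
    obtain U2 where U2: "zero_nbhd \<tau> U2" "top_bounded \<tau> (T ` U2)" using T unfolding Orth_n_def by blast
    have "(\<lambda>x. S x + T x) ` (U1 \<inter> U2) \<subseteq> {a + b | a b. a \<in> S ` U1 \<and> b \<in> T ` U2}" by blast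
    then have "top_bounded \<tau> ((\<lambda>x. S x + T x) ` (U1 \<inter> U2))"
      by (rule top_bounded_subset[OF top_bounded_sums[OF LS U1(2) U2(2)]])
    then show "(\<lambda>x. S x + T x) \<in> Orth_n \<tau>"
      using S T Orth_add zero_nbhd_Int[OF U1(1) U2(1)] unfolding Orth_n_def by blast
  qed
  show "\<forall>c::real. \<forall>T\<in>Orth_n \<tau>. (\<lambda>x. c *\<^sub>R T x) \<in> Orth_n \<tau>"
  proof (intro allI ballI)
    fix c :: real and T assume T: "T \<in> Orth_n \<tau>"
    obtain U where U: "zero_nbhd \<tau> U" "top_bounded \<tau> (T ` U)" using T unfolding Orth_n_def by blast
    have "top_bounded \<tau> ((\<lambda>x. c *\<^sub>R T x) ` U)"
      using top_bounded_scaleR[OF LS U(2)] by (simp add: image_image)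
    then show "(\<lambda>x. c *\<^sub>R T x) \<in> Orth_n \<tau>"
      using T Orth_scaleR U(1) unfolding Orth_n_def by blast
  qed
  show "\<forall>T\<in>Orth_n \<tau>. orth_abs T \<in> Orth_n \<tau>"
  proof
    fix T assume T: "T \<in> Orth_n \<tau>"
    then have "T \<in> Orth" unfolding Orth_n_def by blast
    obtain U where U: "zero_nbhd \<tau> U" "top_bounded \<tau> (T ` U)" using T unfolding Orth_n_def by blast
    obtain W where W: "zero_nbhd \<tau> W" "solid_set W" "W \<subseteq> U" by (rule locally_solid_nbhdE[OF LS U(1)])
    have "T ` vabs ` W \<subseteq> T ` U" using solid_set_vabs[OF W(2)] W(3) by blast
    then have "top_bounded \<tau> (orth_abs T ` W)"
      by (intro top_bounded_orth_abs_image[OF A LS \<open>T \<in> Orth\<close>] top_bounded_subset[OF U(2)])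
    then show "orth_abs T \<in> Orth_n \<tau>"
      unfolding Orth_n_def using orth_abs_Orth[OF A \<open>T \<in> Orth\<close>] W(1) by blast
  qed
qed

lemma Orth_b_sublattice:
  fixes \<tau> :: "'a::{ordered_real_vector, lattice} topology"
  assumes A: "vl_archimedean TYPE('a)" and LS: "locally_solid \<tau>"
  shows "orth_vector_sublattice (Orth_b \<tau>) \<and> (\<forall>T\<in>Orth_b \<tau>. \<exists>R\<in>Orth_b \<tau>. orth_sup_of R T (\<lambda>x. - T x))"
proof (rule orth_vector_sublatticeI[OF A])
  show "Orth_b \<tau> \<subseteq> Orth" unfolding Orth_b_def by blast
  have "top_bounded \<tau> ((\<lambda>x. 0::'a) ` B)" for B
    by (rule top_bounded_subset[OF top_bounded_zero]) blast
  then show "(\<lambda>x. 0) \<in> Orth_b \<tau>" unfolding Orth_b_def using Orth_zero by blast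
  show "\<forall>S\<in>Orth_b \<tau>. \<forall>T\<in>Orth_b \<tau>. (\<lambda>x. S x + T x) \<in> Orth_b \<tau>"
  proof (intro ballI)
    fix S T assume S: "S \<in> Orth_b \<tau>" and T: "T \<in> Orth_b \<tau>"
    have "top_bounded \<tau> ((\<lambda>x. S x + T x) ` B)" if "top_bounded \<tau> B" for B
    proof (rule top_bounded_subset[OF top_bounded_sums[OF LS]])
      show "top_bounded \<tau> (S ` B)" "top_bounded \<tau> (T ` B)" using S T that unfolding Orth_b_def by blast+
    qed blast
    then show "(\<lambda>x. S x + T x) \<in> Orth_b \<tau>" using S T Orth_add unfolding Orth_b_def by blast
  qed
  show "\<forall>c::real. \<forall>T\<in>Orth_b \<tau>. (\<lambda>x. c *\<^sub>R T x) \<in> Orth_b \<tau>"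
  proof (intro allI ballI)
    fix c :: real and T assume T: "T \<in> Orth_b \<tau>"
    have "top_bounded \<tau> ((\<lambda>x. c *\<^sub>R T x) ` B)" if "top_bounded \<tau> B" for B
      using top_bounded_scaleR[OF LS, of "T ` B" c] T that unfolding Orth_b_def by (simp add: image_image)
    then show "(\<lambda>x. c *\<^sub>R T x) \<in> Orth_b \<tau>" using T Orth_scaleR unfolding Orth_b_def by blast
  qed
  show "\<forall>T\<in>Orth_b \<tau>. orth_abs T \<in> Orth_b \<tau>"
  proof
    fix T assume T: "T \<in> Orth_b \<tau>"
    then have "T \<in> Orth" unfolding Orth_b_def by blast
    have "top_bounded \<tau> (orth_abs T ` B)" if B: "top_bounded \<tau> B" for B
    proof (rule top_bounded_orth_abs_image[OF A LS \<open>T \<in> Orth\<close>])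
      have "top_bounded \<tau> (vabs ` B)" by (rule top_bounded_dominated[OF LS B]) auto
      then show "top_bounded \<tau> (T ` vabs ` B)" using T unfolding Orth_b_def by blast
    qed
    then show "orth_abs T \<in> Orth_b \<tau>" unfolding Orth_b_def using orth_abs_Orth[OF A \<open>T \<in> Orth\<close>] by blast
  qed
qed

lemma Orth_c_sublattice:
  fixes \<tau> :: "'a::{ordered_real_vector, lattice} topology"
  assumes A: "vl_archimedean TYPE('a)" and LS: "locally_solid \<tau>"
  shows "orth_vector_sublattice (Orth_c \<tau>) \<and> (\<forall>T\<in>Orth_c \<tau>. \<exists>R\<in>Orth_c \<tau>. orth_sup_of R T (\<lambda>x. - T x))"
proof (rule orth_vector_sublatticeI[OF A])
  have L: "linear_topology \<tau>" by (rule locally_solid_linear_topology[OF LS])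
  show "Orth_c \<tau> \<subseteq> Orth" unfolding Orth_c_def by blast
  show "(\<lambda>x. 0) \<in> Orth_c \<tau>" unfolding Orth_c_def using Orth_zero L by (simp add: linear_topology_def)
  show "\<forall>S\<in>Orth_c \<tau>. \<forall>T\<in>Orth_c \<tau>. (\<lambda>x. S x + T x) \<in> Orth_c \<tau>"
    unfolding Orth_c_def using Orth_add linear_topology_continuous_add[OF L] by blast
  show "\<forall>c::real. \<forall>T\<in>Orth_c \<tau>. (\<lambda>x. c *\<^sub>R T x) \<in> Orth_c \<tau>"
    unfolding Orth_c_def using Orth_scaleR linear_topology_continuous_scaleR[OF L] by blast
  show "\<forall>T\<in>Orth_c \<tau>. orth_abs T \<in> Orth_c \<tau>"
    unfolding Orth_c_def using orth_abs_Orth[OF A] continuous_map_orth_abs[OF LS] by blast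
qed

theorem mainTheorem1:
  fixes \<tau> :: "'a::{ordered_real_vector, lattice} topology"
  assumes "vl_archimedean TYPE('a)"
    and "locally_solid \<tau>"
  shows "orth_vector_sublattice (Orth_n \<tau>) \<and> orth_vector_sublattice (Orth_b \<tau>)
         \<and> orth_vector_sublattice (Orth_c \<tau>)
         \<and> (\<forall>A \<in> {Orth_n \<tau>, Orth_b \<tau>, Orth_c \<tau>}. \<forall>T\<in>A.
              \<exists>R\<in>A. orth_sup_of R T (\<lambda>x. - T x))"
  using Orth_n_sublattice[OF assms] Orth_b_sublattice[OF assms] Orth_c_sublattice[OF assms] by blast

end
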